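(* Let $n\ge1$ with binary expansion $n=\sum_{i=1}^{\ell}2^{m_i}$, $\ell\ge1$, $m_1>\cdots>m_\ell$. Then: (a) $s(T^{gfb}_n)=n-1-(m_1-m_\ell)$; (b) for every $T\in\mathcal{T}_n$ with $\mathcal{C}(T)=c_n$ that is not isomorphic to $T^{gfb}_n$, one has $s(T)<s(T^{gfb}_n)$.
   Context: Bifurcating trees: rooted trees in which every internal node has exactly two children, considered up to isomorphism; $\mathcal{T}_n$ is the set of such trees with $n$ leaves. For a node $w$, $\kappa_T(w)$ is its number of descendant leaves. The Colless index is $\mathcal{C}(T)=\sum_{v}|\kappa_T(v_1)-\kappa_T(v_2)|$, summed over internal nodes $v$ with children $v_1,v_2$; $c_n=\min\{\mathcal{C}(T):T\in\mathcal{T}_n\}$. An internal node is a symmetry vertex if the subtrees rooted at its two children are isomorphic; $s(T)$ is the number of symmetry vertices of $T$. GFB trees: start with a multiset of $n$ single-node trees; while the multiset has more than one tree, remove a tree $u$ with the minimum number of leaves, then remove a tree $v$ with the minimum number of leaves among the remaining trees, and insert the tree consisting of a new root whose two children are the roots of $u$ and $v$; the final tree is the GFB tree $T^{gfb}_n$ (unique up to isomorphism). *)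

theory Defs
  imports Main
begin

text \<open>Bifurcating (full binary) rooted trees, as ordered trees; isomorphism
  of unordered trees is the relation iso_tree below.\<close>
datatype btree = Leaf | Node btree btree

fun iso_tree :: "btree \<Rightarrow> btree \<Rightarrow> bool" where
  "iso_tree Leaf Leaf = True"
| "iso_tree (Node a b) (Node c d) =
     ((iso_tree a c \<and> iso_tree b d) \<or> (iso_tree a d \<and> iso_tree b c))"
| "iso_tree _ _ = False"

fun leaves :: "btree \<Rightarrow> nat" where
  "leaves Leaf = 1"
| "leaves (Node a b) = leaves a + leaves b"

fun colless :: "btree \<Rightarrow> nat" where
  "colless Leaf = 0"
| "colless (Node a b) = colless a + colless b + nat \<bar>int (leaves a) - int (leaves b)\<bar>"

definition min_colless :: "nat \<Rightarrow> nat" where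
  "min_colless n = (LEAST c. \<exists>t. leaves t = n \<and> colless t = c)"

fun sym_vertices :: "btree \<Rightarrow> nat" where
  "sym_vertices Leaf = 0"
| "sym_vertices (Node a b) =
     sym_vertices a + sym_vertices b + (if iso_tree a b then 1 else 0)"

text \<open>GFB algorithm: the multiset is kept as a list sorted by number of leaves;
  the two first entries are two successive minimal trees; the new tree is
  inserted keeping the list sorted.\<close>
function gfb_merge :: "btree list \<Rightarrow> btree" where
  "gfb_merge [] = Leaf"
| "gfb_merge [t] = t"
| "gfb_merge (u # v # rest) = gfb_merge (insort_key leaves (Node u v) rest)"
  by pat_completeness auto
termination
  by (relation "measure length") (auto simp: length_insort)

definition gfb :: "nat \<Rightarrow> btree" where
  "gfb n = gfb_merge (replicate n Leaf)"

end

theory Submission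
  imports Defs "HOL-Library.Discrete_Functions" "HOL-Computational_Algebra.Primes"
begin

text \<open>Let D(n) = bit_span n be floor_log n minus the 2-adic valuation of n; for
  n = 2^m_1 + ... + 2^m_l this is m_1 - m_l. By induction on a Colless-minimal tree T with n
  leaves, s(T) <= n - 1 - D(n), with equality only for the GFB tree. Both root subtrees of T are
  minimal and their sizes a, b lie in [2^(k-1), 2^k], where 2^k <= n < 2^(k+1). If a = b the root
  may be a symmetry vertex, but D(2a) = D(a) >= 0, with equality only if a is a power of two. If
  a ~= b the root is not symmetric and D(a + b) <= D(a) + D(b) + 1, with equality exactly when a
  or b is a power of two. Simulating the GFB algorithm level by level shows that the root of the
  GFB tree splits into a complete tree with 2^(k-1) or 2^k leaves and the GFB tree on the
  remaining leaves, which realises every equality case.\<close>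

lemma iso_tree_refl [simp]: "iso_tree t t"
  by (induction t) auto

lemma iso_tree_sym: "iso_tree s t \<Longrightarrow> iso_tree t s"
  by (induction s t rule: iso_tree.induct) auto

lemma iso_tree_trans: "iso_tree s t \<Longrightarrow> iso_tree t u \<Longrightarrow> iso_tree s u"
proof (induction s arbitrary: t u)
  case Leaf
  then show ?case by (cases t; cases u) auto
next
  case (Node a b)
  then show ?case by (cases t; cases u) (auto; blast)+
qed

lemma iso_tree_leaves: "iso_tree s t \<Longrightarrow> leaves s = leaves t"
  by (induction s t rule: iso_tree.induct) auto

lemma iso_tree_sym_vertices: "iso_tree s t \<Longrightarrow> sym_vertices s = sym_vertices t"
proof (induction s t rule: iso_tree.induct)
  case (2 a b c d)
  then show ?case by (auto dest: iso_tree_sym iso_tree_trans) (meson iso_tree_sym iso_tree_trans)+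
qed auto

lemma leaves_ge_1: "1 \<le> leaves t"
  by (induction t) auto

section \<open>The minimal Colless index\<close>

function min_colless_rec :: "nat \<Rightarrow> nat" where
  "min_colless_rec n =
     (if n \<le> 1 then 0
      else if even n then 2 * min_colless_rec (n div 2)
      else min_colless_rec (n div 2) + min_colless_rec (n div 2 + 1) + 1)"
  by auto
termination by (relation "measure id") (auto elim!: oddE)

declare min_colless_rec.simps [simp del]

lemma min_colless_rec_0 [simp]: "min_colless_rec 0 = 0"
  and min_colless_rec_1 [simp]: "min_colless_rec 1 = 0"
  and min_colless_rec_Suc_0 [simp]: "min_colless_rec (Suc 0) = 0"
  by (simp_all add: min_colless_rec.simps)

lemma min_colless_rec_double: "min_colless_rec (2 * x) = 2 * min_colless_rec x"
  by (cases "x = 0") (auto simp: min_colless_rec.simps[of "2 * x"])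

lemma min_colless_rec_odd:
  "1 \<le> x \<Longrightarrow> min_colless_rec (2 * x + 1) = min_colless_rec x + min_colless_rec (x + 1) + 1"
  by (subst min_colless_rec.simps) simp

definition balanced_part :: "nat \<Rightarrow> nat \<Rightarrow> bool" where
  "balanced_part n a \<longleftrightarrow> 2 ^ floor_log n \<le> 2 * a \<and> a \<le> 2 ^ floor_log n"

definition tight_split :: "nat \<Rightarrow> nat \<Rightarrow> bool" where
  "tight_split a b \<longleftrightarrow>
     int (min_colless_rec (a + b)) = int (min_colless_rec a) + int (min_colless_rec b) + \<bar>int a - int b\<bar>"

text \<open>The bound and its equality case have to be proved together: the equality case for
  the halves is what controls the equality case for the whole.\<close>
definition split_bound :: "nat \<Rightarrow> nat \<Rightarrow> bool" where
  "split_bound a b \<longleftrightarrow>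
     int (min_colless_rec (a + b)) \<le> int (min_colless_rec a) + int (min_colless_rec b) + \<bar>int a - int b\<bar> \<and>
     (tight_split a b \<and> 1 \<le> a \<and> 1 \<le> b \<longrightarrow> balanced_part (a + b) a \<and> balanced_part (a + b) b)"

lemma balanced_part_double: "0 < a \<Longrightarrow> balanced_part (2 * a) a"
  using floor_log_exp2_le[of a] floor_log_exp2_gt[of a] by (simp add: balanced_part_def)

lemma balanced_part_pos: "balanced_part n a \<Longrightarrow> 0 < a"
  using one_le_power[of "2::nat" "floor_log n"] unfolding balanced_part_def by linarith

lemma split_bound_sym: "split_bound a b \<Longrightarrow> split_bound b a"
  unfolding split_bound_def tight_split_def by (simp add: add.commute abs_minus_commute)

lemma split_bound_0: "split_bound a 0"
  unfolding split_bound_def by simp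

lemma split_bound_1_1: "split_bound 1 1"
proof -
  have "balanced_part 2 1" using balanced_part_double[of 1] by simp
  moreover have "min_colless_rec 2 = 0" using min_colless_rec_double[of 1] by simp
  ultimately show ?thesis by (simp add: split_bound_def numeral_2_eq_2)
qed

lemma split_bound_even_even:
  assumes "split_bound x y" "1 \<le> x" "1 \<le> y"
  shows "split_bound (2 * x) (2 * y)"
proof -
  have sum: "min_colless_rec (2 * x + 2 * y) = 2 * min_colless_rec (x + y)"
    using min_colless_rec_double[of "x + y"] by (simp add: algebra_simps)
  have log: "floor_log (2 * x + 2 * y) = Suc (floor_log (x + y))"
    using floor_log_twice[of "x + y"] assms by (simp add: algebra_simps)
  from assms show ?thesis
    unfolding split_bound_def tight_split_def balanced_part_def
    by (auto simp: sum log min_colless_rec_double abs_if)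
qed

lemma split_bound_odd_odd:
  assumes "split_bound (x + 1) y" "split_bound x (y + 1)" "1 \<le> x" "1 \<le> y"
  shows "split_bound (2 * x + 1) (2 * y + 1)"
proof -
  let ?c = min_colless_rec
  have sum: "?c ((2 * x + 1) + (2 * y + 1)) = 2 * ?c (x + y + 1)"
    using min_colless_rec_double[of "x + y + 1"] by (simp add: algebra_simps)
  have le1: "int (?c (x + y + 1)) \<le> int (?c (x + 1)) + int (?c y) + \<bar>int x + 1 - int y\<bar>"
    using assms(1) unfolding split_bound_def by (simp add: algebra_simps)
  have le2: "int (?c (x + y + 1)) \<le> int (?c x) + int (?c (y + 1)) + \<bar>int x - int y - 1\<bar>"
    using assms(2) unfolding split_bound_def by (simp add: algebra_simps)
  have odd: "?c (2 * x + 1) = ?c x + ?c (x + 1) + 1" "?c (2 * y + 1) = ?c y + ?c (y + 1) + 1"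
    using min_colless_rec_odd assms by auto
  have "int (?c ((2 * x + 1) + (2 * y + 1)))
      \<le> int (?c (2 * x + 1)) + int (?c (2 * y + 1)) + \<bar>int (2 * x + 1) - int (2 * y + 1)\<bar>"
    using le1 le2 sum odd by (simp add: abs_if split: if_splits)
  moreover have "x = y" if "tight_split (2 * x + 1) (2 * y + 1)"
    using that le1 le2 sum odd unfolding tight_split_def by (simp add: abs_if split: if_splits)
  then have "balanced_part ((2 * x + 1) + (2 * y + 1)) (2 * x + 1) \<and>
      balanced_part ((2 * x + 1) + (2 * y + 1)) (2 * y + 1)" if "tight_split (2 * x + 1) (2 * y + 1)"
    using that balanced_part_double[of "2 * x + 1"] by (simp add: mult_2)
  ultimately show ?thesis unfolding split_bound_def by blast
qed

lemma split_bound_odd_1: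
  assumes "split_bound x 1" "1 \<le> x"
  shows "split_bound (2 * x + 1) 1"
proof -
  let ?c = min_colless_rec
  have "?c ((2 * x + 1) + 1) = 2 * ?c (x + 1)"
    using min_colless_rec_double[of "x + 1"] by (simp add: algebra_simps)
  moreover have "int (?c (x + 1)) \<le> int (?c x) + \<bar>int x - 1\<bar>"
    using assms(1) unfolding split_bound_def by (simp add: algebra_simps)
  moreover have "?c (2 * x + 1) = ?c x + ?c (x + 1) + 1"
    using min_colless_rec_odd assms by auto
  ultimately have "int (?c ((2 * x + 1) + 1)) < int (?c (2 * x + 1)) + int (?c 1) + \<bar>int (2 * x + 1) - int 1\<bar>"
    using assms by (simp add: abs_if split: if_splits)
  then show ?thesis unfolding split_bound_def tight_split_def by auto
qed

lemma balanced_part_even_odd: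
  assumes "balanced_part (x + y) x" "balanced_part (x + y) y"
    and "balanced_part (x + y + 1) x" "balanced_part (x + y + 1) (y + 1)"
  shows "balanced_part (2 * x + (2 * y + 1)) (2 * x) \<and> balanced_part (2 * x + (2 * y + 1)) (2 * y + 1)"
proof -
  define K where "K = floor_log (x + y)"
  have K: "2 ^ K \<le> x + y" "x + y < 2 * 2 ^ K"
    using floor_log_exp2_le[of "x + y"] floor_log_exp2_gt[of "x + y"] balanced_part_pos[OF assms(1)] K_def
    by auto
  have log: "floor_log (2 * x + (2 * y + 1)) = Suc K"
    using K by (intro floor_log_eqI) auto
  have "y + 1 \<le> 2 ^ K"
  proof (cases "x + y + 1 < 2 * 2 ^ K")
    case True
    then have "floor_log (x + y + 1) = K" using K by (intro floor_log_eqI) auto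
    then show ?thesis using assms(4) unfolding balanced_part_def by simp
  next
    case False
    then have "floor_log (x + y + 1) = Suc K" using K by (intro floor_log_eqI) auto
    then show ?thesis using assms(3) False K unfolding balanced_part_def by simp
  qed
  then show ?thesis using assms(1,2) log unfolding balanced_part_def K_def by simp
qed

lemma split_bound_even_odd:
  assumes "split_bound x y" "split_bound x (y + 1)" "1 \<le> x" "1 \<le> y"
  shows "split_bound (2 * x) (2 * y + 1)"
proof -
  let ?c = min_colless_rec
  have sum: "?c (2 * x + (2 * y + 1)) = ?c (x + y) + ?c (x + y + 1) + 1"
    using min_colless_rec_odd[of "x + y"] assms by (simp add: algebra_simps)
  have le1: "int (?c (x + y)) \<le> int (?c x) + int (?c y) + \<bar>int x - int y\<bar>"
    using assms(1) unfolding split_bound_def by simp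
  have le2: "int (?c (x + y + 1)) \<le> int (?c x) + int (?c (y + 1)) + \<bar>int x - int y - 1\<bar>"
    using assms(2) unfolding split_bound_def by (simp add: algebra_simps)
  have parts: "?c (2 * x) = 2 * ?c x" "?c (2 * y + 1) = ?c y + ?c (y + 1) + 1"
    using min_colless_rec_odd min_colless_rec_double assms by auto
  have dist: "\<bar>int (2 * x) - int (2 * y + 1)\<bar> = \<bar>int x - int y\<bar> + \<bar>int x - int y - 1\<bar>"
    by (simp add: abs_if)
  have "int (?c (2 * x + (2 * y + 1))) \<le> int (?c (2 * x)) + int (?c (2 * y + 1)) + \<bar>int (2 * x) - int (2 * y + 1)\<bar>"
    using le1 le2 sum parts dist by linarith
  moreover have "balanced_part (2 * x + (2 * y + 1)) (2 * x) \<and> balanced_part (2 * x + (2 * y + 1)) (2 * y + 1)"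
    if "tight_split (2 * x) (2 * y + 1)"
  proof -
    have "tight_split x y" "tight_split x (y + 1)"
      using that le1 le2 sum parts dist unfolding tight_split_def by (simp_all add: algebra_simps)
    then show ?thesis
      using assms balanced_part_even_odd[of x y] unfolding split_bound_def by (auto simp: algebra_simps)
  qed
  ultimately show ?thesis unfolding split_bound_def by blast
qed

lemma split_bound_even_1:
  assumes "split_bound x 1" "1 \<le> x"
  shows "split_bound (2 * x) 1"
proof -
  let ?c = min_colless_rec
  have sum: "?c (2 * x + 1) = ?c x + ?c (x + 1) + 1"
    using min_colless_rec_odd assms by simp
  have le: "int (?c (x + 1)) \<le> int (?c x) + \<bar>int x - 1\<bar>"
    using assms(1) unfolding split_bound_def by (simp add: algebra_simps)
  have "int (?c (2 * x + 1)) \<le> int (?c (2 * x)) + int (?c 1) + \<bar>int (2 * x) - int 1\<bar>"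
    using sum le assms by (simp add: min_colless_rec_double abs_if split: if_splits)
  moreover have "balanced_part (2 * x + 1) (2 * x) \<and> balanced_part (2 * x + 1) 1"
    if "tight_split (2 * x) 1"
  proof -
    have "x = 1"
      using that sum le assms unfolding tight_split_def
      by (simp add: min_colless_rec_double abs_if split: if_splits)
    moreover have "floor_log 3 = 1" by (rule floor_log_eqI) auto
    ultimately show ?thesis by (simp add: balanced_part_def numeral_3_eq_3)
  qed
  ultimately show ?thesis unfolding split_bound_def by blast
qed

lemma split_bound_all: "split_bound a b"
proof (induction "a + b" arbitrary: a b rule: less_induct)
  case less
  have IH: "split_bound x y" if "x + y < a + b" for x y
    using less that by blast
  obtain x i where a: "a = 2 * x + i" "i < 2" by (metis mod_less_divisor mult_div_mod_eq zero_less_numeral)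
  obtain y j where b: "b = 2 * y + j" "j < 2" by (metis mod_less_divisor mult_div_mod_eq zero_less_numeral)
  consider (zero) "a = 0 \<or> b = 0" | (even_even) "i = 0" "j = 0" "x \<ge> 1" "y \<ge> 1"
    | (odd_odd) "i = 1" "j = 1" | (even_odd) "i = 0" "j = 1" "x \<ge> 1" | (odd_even) "i = 1" "j = 0" "y \<ge> 1"
    using a b by fastforce
  then show ?case
  proof cases
    case zero
    then show ?thesis using split_bound_0 split_bound_sym by blast
  next
    case even_even
    then show ?thesis using split_bound_even_even IH a b by simp
  next
    case odd_odd
    consider "x = 0" "y = 0" | "x = 0" "y \<ge> 1" | "x \<ge> 1" "y = 0" | "x \<ge> 1" "y \<ge> 1" by linarith
    then show ?thesis
    proof cases
      case 1
      then show ?thesis using odd_odd a b split_bound_1_1 by simp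
    next
      case 2
      then have "split_bound b a" using odd_odd a b IH split_bound_odd_1 by simp
      then show ?thesis by (rule split_bound_sym)
    next
      case 3
      then show ?thesis using odd_odd a b IH split_bound_odd_1 by simp
    next
      case 4
      then show ?thesis using odd_odd a b IH split_bound_odd_odd by simp
    qed
  next
    case even_odd
    then show ?thesis
      using a b IH split_bound_even_1 split_bound_even_odd by (cases "y = 0") simp_all
  next
    case odd_even
    then have "split_bound b a"
      using a b IH split_bound_even_1 split_bound_even_odd by (cases "x = 0") (simp_all add: add.commute)
    then show ?thesis by (rule split_bound_sym)
  qed
qed

lemma min_colless_rec_add_le:
  "int (min_colless_rec (a + b)) \<le> int (min_colless_rec a) + int (min_colless_rec b) + \<bar>int a - int b\<bar>"
  using split_bound_all[of a b] unfolding split_bound_def by blast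

lemma tight_split_balanced:
  "tight_split a b \<Longrightarrow> 1 \<le> a \<Longrightarrow> 1 \<le> b \<Longrightarrow> balanced_part (a + b) a \<and> balanced_part (a + b) b"
  using split_bound_all[of a b] unfolding split_bound_def by blast

lemma min_colless_rec_le_colless: "min_colless_rec (leaves t) \<le> colless t"
proof (induction t)
  case (Node a b)
  have "int (min_colless_rec (leaves a + leaves b))
      \<le> int (min_colless_rec (leaves a)) + int (min_colless_rec (leaves b)) + \<bar>int (leaves a) - int (leaves b)\<bar>"
    by (rule min_colless_rec_add_le)
  also have "\<dots> \<le> int (colless (Node a b))" using Node by simp
  finally show ?case by simp
qed simp

lemma ex_colless_eq_min_colless_rec: "1 \<le> n \<Longrightarrow> \<exists>t. leaves t = n \<and> colless t = min_colless_rec n"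
proof (induction n rule: less_induct)
  case (less n)
  consider "n = 1" | x where "n = 2 * x" "1 \<le> x" | x where "n = 2 * x + 1" "1 \<le> x"
    using less.prems by (cases "even n"; cases "n = 1") (auto elim!: evenE oddE)
  then show ?case
  proof cases
    case 1
    then show ?thesis by (intro exI[of _ Leaf]) simp
  next
    case (2 x)
    then obtain t where "leaves t = x" "colless t = min_colless_rec x" using less.IH[of x] by auto
    then show ?thesis using 2 min_colless_rec_double[of x] by (intro exI[of _ "Node t t"]) simp
  next
    case (3 x)
    obtain t where t: "leaves t = x" "colless t = min_colless_rec x" using less.IH[of x] 3 by auto
    obtain u where u: "leaves u = x + 1" "colless u = min_colless_rec (x + 1)" using less.IH[of "x + 1"] 3 by auto
    show ?thesis using 3 t u min_colless_rec_odd[of x] by (intro exI[of _ "Node t u"]) simp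
  qed
qed

lemma min_colless_eq_rec: "1 \<le> n \<Longrightarrow> min_colless n = min_colless_rec n"
  unfolding min_colless_def
  by (rule Least_equality) (use ex_colless_eq_min_colless_rec min_colless_rec_le_colless in auto)

lemma colless_minimal_Node:
  assumes "colless (Node a b) = min_colless_rec (leaves (Node a b))"
  shows "colless a = min_colless_rec (leaves a)" "colless b = min_colless_rec (leaves b)"
    and "tight_split (leaves a) (leaves b)"
  using min_colless_rec_le_colless[of a] min_colless_rec_le_colless[of b] assms
    min_colless_rec_add_le[of "leaves a" "leaves b"]
  unfolding tight_split_def by simp_all

section \<open>The span of the binary expansion\<close>

definition bit_span :: "nat \<Rightarrow> int" where
  "bit_span n = int (floor_log n) - int (multiplicity 2 n)"

lemma floor_log_mult_pow2: "0 < n \<Longrightarrow> floor_log (2 ^ t * n) = t + floor_log n"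
  by (induction t) (simp_all add: mult.assoc)

lemma floor_log_pos: "2 \<le> n \<Longrightarrow> 1 \<le> floor_log n"
  using floor_log_rec[of n] by (simp del: floor_log_half)

lemma exponent_eq_if_pow2_between:
  "2 ^ k \<le> (2::nat) ^ i \<Longrightarrow> 2 ^ i \<le> (2::nat) ^ Suc k \<Longrightarrow> i = k \<or> i = Suc k"
  by (metis le_SucE le_antisym power_increasing_iff one_less_numeral_iff semiring_norm(76))

lemma multiplicity_add_less:
  fixes p a b :: nat
  assumes "0 < a" "multiplicity p a < multiplicity p b"
  shows "multiplicity p (a + b) = multiplicity p a"
proof (cases "is_unit p")
  case True
  then show ?thesis using assms(2) by (simp add: multiplicity_unit_left)
next
  case False
  have "p ^ Suc (multiplicity p a) dvd b" using assms(2) by (intro multiplicity_dvd') simp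
  moreover have "\<not> p ^ Suc (multiplicity p a) dvd a"
    using power_dvd_iff_le_multiplicity[of a p "Suc (multiplicity p a)"] assms(1) False by simp
  ultimately have "\<not> p ^ Suc (multiplicity p a) dvd a + b" by (simp add: dvd_add_left_iff)
  moreover have "p ^ multiplicity p a dvd a + b"
    using assms(2) by (intro dvd_add multiplicity_dvd multiplicity_dvd') simp
  ultimately show ?thesis by (intro multiplicity_eqI)
qed

lemma multiplicity_2_add_same:
  fixes a b :: nat
  assumes "0 < a" "0 < b" "multiplicity 2 a = multiplicity 2 b"
  shows "multiplicity 2 a < multiplicity 2 (a + b)"
proof -
  define m where "m = multiplicity 2 a"
  obtain a' where a: "a = 2 ^ m * a'" "odd a'"
    using multiplicity_decompose'[of a 2] assms(1) m_def by auto
  obtain b' where b: "b = 2 ^ m * b'" "odd b'"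
    using multiplicity_decompose'[of b 2] assms(2,3) m_def by auto
  obtain c where c: "a' + b' = 2 * c" using a(2) b(2) by (metis evenE odd_add)
  have "a + b = 2 ^ m * (a' + b')" using a(1) b(1) by (simp add: algebra_simps)
  also have "\<dots> = 2 ^ Suc m * c" using c by simp
  finally have "2 ^ Suc m dvd a + b" by simp
  then have "Suc m \<le> multiplicity 2 (a + b)"
    using assms(1) by (intro multiplicity_geI) auto
  then show ?thesis using m_def by simp
qed

lemma multiplicity_2_le_floor_log: "0 < x \<Longrightarrow> multiplicity 2 x \<le> floor_log x"
proof -
  assume "0 < x"
  then have "2 ^ multiplicity 2 x \<le> x" by (intro dvd_imp_le multiplicity_dvd)
  also have "x < 2 ^ Suc (floor_log x)" using floor_log_exp2_gt[of x] by simp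
  finally have "(2::nat) ^ multiplicity 2 x < 2 ^ Suc (floor_log x)" .
  then show ?thesis by (subst (asm) power_strict_increasing_iff) auto
qed

lemma pow2_if_multiplicity_2_eq_floor_log:
  assumes "0 < x" "multiplicity 2 x = floor_log x"
  shows "x = 2 ^ floor_log x"
proof -
  obtain m where m: "x = 2 ^ floor_log x * m" using multiplicity_dvd[of 2 x] assms(2) by (auto elim: dvdE)
  have "x < 2 ^ floor_log x * 2" using floor_log_exp2_gt[of x] by simp
  then have "m < 2" using m by (metis mult_less_cancel1)
  moreover have "m \<noteq> 0" using m assms(1) by (metis mult_0_right less_irrefl)
  ultimately have "m = 1" by simp
  then show ?thesis using m by simp
qed

lemma bit_span_pow2 [simp]: "bit_span (2 ^ k) = 0"
  by (simp add: bit_span_def multiplicity_same_power)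

lemma bit_span_nonneg: "0 < x \<Longrightarrow> 0 \<le> bit_span x"
  using multiplicity_2_le_floor_log[of x] by (simp add: bit_span_def)

lemma pow2_if_bit_span_eq_0: "0 < x \<Longrightarrow> bit_span x = 0 \<Longrightarrow> x = 2 ^ floor_log x"
  by (rule pow2_if_multiplicity_2_eq_floor_log) (simp_all add: bit_span_def)

lemma bit_span_double: "0 < x \<Longrightarrow> bit_span (2 * x) = bit_span x"
  by (simp add: bit_span_def multiplicity_times_same)

lemma bit_span_add_ordered:
  assumes "2 ^ k \<le> b" "b < a" "a \<le> 2 ^ Suc k"
  shows "bit_span (a + b) \<le> bit_span a + bit_span b + 1 \<and>
    (bit_span (a + b) = bit_span a + bit_span b + 1 \<longleftrightarrow> a = 2 ^ Suc k \<or> b = 2 ^ k)"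
proof -
  let ?m = "multiplicity 2"
  have pos: "0 < b" "0 < a" using assms by (auto intro: less_le_trans[of 0 "2 ^ k"])
  have log_sum: "floor_log (a + b) = Suc k" using assms by (intro floor_log_eqI) auto
  have log_b: "floor_log b = k" using assms by (intro floor_log_eqI) auto
  have mb: "?m b \<le> k" using multiplicity_2_le_floor_log[OF pos(1)] log_b by simp
  show ?thesis
  proof (cases "a = 2 ^ Suc k")
    case True
    then have ma: "?m a = Suc k" using multiplicity_same_power[of "2::nat" "Suc k"] by simp
    then have "?m (a + b) = ?m b" using multiplicity_add_less[of b 2 a] pos mb by (simp add: add.commute)
    then show ?thesis using True ma log_sum log_b mb unfolding bit_span_def by simp
  next
    case a_less: False
    have log_a: "floor_log a = k" using assms a_less by (intro floor_log_eqI) auto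
    have "a \<noteq> 2 ^ k" using assms by auto
    then have ma: "?m a < k"
      using multiplicity_2_le_floor_log[OF pos(2)] pow2_if_multiplicity_2_eq_floor_log[OF pos(2)] log_a
      by fastforce
    show ?thesis
    proof (cases "b = 2 ^ k")
      case True
      then have mb': "?m b = k" using multiplicity_same_power[of "2::nat" k] by simp
      then have "?m (a + b) = ?m a" using multiplicity_add_less[of a 2 b] pos ma by simp
      then show ?thesis using True mb' log_sum log_a log_b ma unfolding bit_span_def by simp
    next
      case False
      then have "?m b < k"
        using mb pow2_if_multiplicity_2_eq_floor_log[OF pos(1)] log_b by fastforce
      moreover have "min (?m a) (?m b) + (if ?m a = ?m b then 1 else 0) \<le> ?m (a + b)"
        using multiplicity_add_less[of a 2 b] multiplicity_add_less[of b 2 a]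
          multiplicity_2_add_same[of a b] pos
        by (cases "?m a" "?m b" rule: linorder_cases) (auto simp: add.commute)
      ultimately show ?thesis
        using log_sum log_a log_b ma a_less False unfolding bit_span_def by (auto split: if_splits)
    qed
  qed
qed

lemma bit_span_add:
  assumes "balanced_part (a + b) a" "balanced_part (a + b) b" "a \<noteq> b"
  shows "bit_span (a + b) \<le> bit_span a + bit_span b + 1"
    and "bit_span (a + b) = bit_span a + bit_span b + 1 \<longleftrightarrow> (\<exists>i. a = 2 ^ i) \<or> (\<exists>i. b = 2 ^ i)"
proof -
  define k where "k = floor_log (a + b) - 1"
  have "0 < a" "0 < b" using assms(1,2) by (simp_all add: balanced_part_pos)
  then have "1 \<le> floor_log (a + b)" by (intro floor_log_pos) simp
  then have "floor_log (a + b) = Suc k" using k_def by simp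
  then have bounds: "2 ^ k \<le> a" "a \<le> 2 ^ Suc k" "2 ^ k \<le> b" "b \<le> 2 ^ Suc k"
    using assms(1,2) unfolding balanced_part_def by simp_all
  have pow2_iff: "(\<exists>i. x = 2 ^ i) \<longleftrightarrow> x = 2 ^ k \<or> x = 2 ^ Suc k"
    if "2 ^ k \<le> x" "x \<le> 2 ^ Suc k" for x :: nat
    using that exponent_eq_if_pow2_between[of k] by blast
  have "bit_span (a + b) \<le> bit_span a + bit_span b + 1 \<and>
    (bit_span (a + b) = bit_span a + bit_span b + 1 \<longleftrightarrow> (\<exists>i. a = 2 ^ i) \<or> (\<exists>i. b = 2 ^ i))"
  proof (cases "b < a")
    case True
    then show ?thesis
      using bit_span_add_ordered[of k b a] bounds pow2_iff[of a] pow2_iff[of b] by auto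
  next
    case False
    then have "a < b" using assms(3) by simp
    then show ?thesis
      using bit_span_add_ordered[of k a b] bounds pow2_iff[of a] pow2_iff[of b] by (auto simp: add.commute)
  qed
  then show "bit_span (a + b) \<le> bit_span a + bit_span b + 1"
    and "bit_span (a + b) = bit_span a + bit_span b + 1 \<longleftrightarrow> (\<exists>i. a = 2 ^ i) \<or> (\<exists>i. b = 2 ^ i)"
    by auto
qed

section \<open>Complete trees and the GFB algorithm\<close>

fun complete_tree :: "nat \<Rightarrow> btree" where
  "complete_tree 0 = Leaf"
| "complete_tree (Suc k) = Node (complete_tree k) (complete_tree k)"

lemma leaves_complete_tree [simp]: "leaves (complete_tree k) = 2 ^ k"
  by (induction k) auto

lemma sym_vertices_complete_tree: "sym_vertices (complete_tree k) = 2 ^ k - 1"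
proof (induction k)
  case (Suc k)
  have "1 \<le> (2::nat) ^ k" by simp
  then show ?case using Suc by (simp; arith)
qed simp

lemma insort_key_append_less:
  "\<forall>y\<in>set xs. f y < f x \<Longrightarrow> insort_key f x (xs @ ys) = xs @ insort_key f x ys"
  by (induction xs) auto

lemma insort_key_snoc: "\<forall>y\<in>set xs. f y < f x \<Longrightarrow> insort_key f x xs = xs @ [x]"
  using insort_key_append_less[of xs f x "[]"] by simp

lemma leaves_gfb_merge: "xs \<noteq> [] \<Longrightarrow> leaves (gfb_merge xs) = (\<Sum>t\<leftarrow>xs. leaves t)"
proof (induction xs rule: gfb_merge.induct)
  case (3 u v rest)
  have "(\<Sum>t\<leftarrow>insort_key leaves (Node u v) rest. leaves t) = leaves (Node u v) + (\<Sum>t\<leftarrow>rest. leaves t)"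
    by (induction rest) auto
  then show ?case using 3 by simp
qed auto

lemma leaves_gfb: "1 \<le> n \<Longrightarrow> leaves (gfb n) = n"
  unfolding gfb_def by (simp add: leaves_gfb_merge sum_list_replicate)

lemma gfb_merge_pair_complete:
  assumes "\<forall>t\<in>set mid. leaves t < 2 ^ Suc j"
  shows "gfb_merge (replicate p (complete_tree j) @ mid @ replicate q (complete_tree (Suc j))) =
    gfb_merge (replicate (p mod 2) (complete_tree j) @ mid @ replicate (q + p div 2) (complete_tree (Suc j)))"
proof (induction p arbitrary: q rule: less_induct)
  case (less p)
  show ?case
  proof (cases "p < 2")
    case True
    then show ?thesis by (cases p) auto
  next
    case False
    then obtain p' where p: "p = Suc (Suc p')" by (metis add_2_eq_Suc le_add_diff_inverse not_less)
    have "\<forall>t\<in>set (replicate p' (complete_tree j) @ mid). leaves t < leaves (complete_tree (Suc j))"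
      using assms by auto
    then have "insort_key leaves (complete_tree (Suc j)) (replicate p' (complete_tree j) @ mid @ replicate q (complete_tree (Suc j)))
        = replicate p' (complete_tree j) @ mid @ replicate (Suc q) (complete_tree (Suc j))"
      using insort_key_append_less[of "replicate p' (complete_tree j) @ mid" leaves "complete_tree (Suc j)"
          "replicate q (complete_tree (Suc j))"]
      by (simp add: insort_is_Cons)
    then have "gfb_merge (replicate p (complete_tree j) @ mid @ replicate q (complete_tree (Suc j)))
       = gfb_merge (replicate p' (complete_tree j) @ mid @ replicate (Suc q) (complete_tree (Suc j)))"
      using p by simp
    also have "\<dots> = gfb_merge (replicate (p mod 2) (complete_tree j) @ mid @ replicate (q + p div 2) (complete_tree (Suc j)))"
      using less.IH[of p' "Suc q"] p by simp
    finally show ?thesis .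
  qed
qed

lemma gfb_merge_replicate_double:
  "gfb_merge (replicate (2 * p) (complete_tree j)) = gfb_merge (replicate p (complete_tree (Suc j)))"
  using gfb_merge_pair_complete[of "[]" j "2 * p" 0] by simp

lemma gfb_merge_replicate_odd:
  assumes "1 \<le> p"
  shows "gfb_merge (replicate (2 * p + 1) (complete_tree j)) =
    gfb_merge (replicate (p - 1) (complete_tree (Suc j)) @ [Node (complete_tree j) (complete_tree (Suc j))])"
proof -
  obtain q where p: "p = Suc q" using assms by (cases p) auto
  have "gfb_merge (replicate (2 * p + 1) (complete_tree j)) =
      gfb_merge (complete_tree j # complete_tree (Suc j) # replicate q (complete_tree (Suc j)))"
    using gfb_merge_pair_complete[of "[]" j "2 * p + 1" 0] p by simp
  also have "\<dots> = gfb_merge (replicate q (complete_tree (Suc j)) @ [Node (complete_tree j) (complete_tree (Suc j))])"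
    by (simp add: insort_key_snoc)
  finally show ?thesis using p by simp
qed

lemma gfb_merge_replicate_pow2:
  "gfb_merge (replicate (2 ^ t * p) (complete_tree j)) = gfb_merge (replicate p (complete_tree (j + t)))"
proof (induction t arbitrary: j)
  case (Suc t)
  have "gfb_merge (replicate (2 ^ Suc t * p) (complete_tree j)) = gfb_merge (replicate (2 ^ t * p) (complete_tree (Suc j)))"
    using gfb_merge_replicate_double[of "2 ^ t * p" j] by (simp add: mult.assoc)
  then show ?case using Suc[of "Suc j"] by simp
qed simp

lemma gfb_pow2: "gfb (2 ^ k) = complete_tree k"
  using gfb_merge_replicate_pow2[of k 1 0] by (simp add: gfb_def)

lemma gfb_merge_step:
  assumes "2 \<le> M" "2 ^ j < leaves R" "leaves R < 2 ^ Suc j"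
  shows "gfb_merge (replicate (M - 1) (complete_tree j) @ [R]) =
    gfb_merge (replicate (M div 2 - 1) (complete_tree (Suc j)) @
      [if even M then Node (complete_tree j) R else Node R (complete_tree (Suc j))])"
proof -
  have pair: "gfb_merge (replicate (M - 1) (complete_tree j) @ [R]) =
      gfb_merge (replicate ((M - 1) mod 2) (complete_tree j) @ [R] @ replicate ((M - 1) div 2) (complete_tree (Suc j)))"
    using gfb_merge_pair_complete[of "[R]" j "M - 1" 0] assms by simp
  show ?thesis
  proof (cases "even M")
    case True
    have "(M - 1) mod 2 = 1" "(M - 1) div 2 = M div 2 - 1" using assms(1) True by presburger+
    then show ?thesis using pair True assms(2) by (simp add: insort_key_snoc)
  next
    case False
    obtain q where "M div 2 = Suc q" using assms(1) by (metis Suc_pred div_greater_zero_iff zero_less_numeral)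
    moreover have "(M - 1) mod 2 = 0" "(M - 1) div 2 = M div 2" using False by presburger+
    ultimately show ?thesis using pair False assms(2) by (simp add: insort_key_snoc)
  qed
qed

text \<open>One has split_exp M = floor_log (2 * M div 3); the recursion is what the proofs use.\<close>
fun split_exp :: "nat \<Rightarrow> nat" where
  "split_exp M = (if M \<le> 2 then 0 else if M = 3 then 1 else Suc (split_exp (M div 2)))"

declare split_exp.simps [simp del]

lemma split_exp_small: "split_exp 1 = 0" "split_exp (Suc 0) = 0" "split_exp 2 = 0" "split_exp 3 = 1"
  by (simp_all add: split_exp.simps)

lemma split_exp_rec: "4 \<le> M \<Longrightarrow> split_exp M = Suc (split_exp (M div 2))"
  by (simp add: split_exp.simps[of M])

lemma split_exp_bounds:
  assumes "1 \<le> M"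
  shows "split_exp M \<le> floor_log M \<and> floor_log M \<le> Suc (split_exp M) \<and> 2 ^ split_exp M \<le> M \<and>
    2 ^ floor_log M \<le> 2 * (M - 2 ^ split_exp M) + 1 \<and> 2 * (M - 2 ^ split_exp M) + 1 \<le> 2 * 2 ^ floor_log M"
  using assms
proof (induction M rule: less_induct)
  case (less M)
  have log_small: "floor_log 2 = 1" "floor_log 3 = 1" by (rule floor_log_eqI; simp)+
  consider "M = 1" | "M = 2" | "M = 3" | "4 \<le> M" using less.prems by linarith
  then show ?case
  proof cases
    case 4
    define H where "H = M div 2"
    have "2 \<le> H" "H < M" using 4 H_def by auto
    then have IH: "split_exp H \<le> floor_log H" "floor_log H \<le> Suc (split_exp H)" "2 ^ split_exp H \<le> H"
        "2 ^ floor_log H \<le> 2 * (H - 2 ^ split_exp H) + 1" "2 * (H - 2 ^ split_exp H) + 1 \<le> 2 * 2 ^ floor_log H"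
      using less.IH[of H] by auto
    define W :: nat where "W = 2 ^ (floor_log H - 1)"
    have W: "2 ^ floor_log H = 2 * W"
      using floor_log_pos[OF \<open>2 \<le> H\<close>] by (cases "floor_log H") (simp_all add: W_def)
    have log: "floor_log M = Suc (floor_log H)"
      using floor_log_rec[of M] 4 unfolding H_def by (simp del: floor_log_half)
    have exp: "split_exp M = Suc (split_exp H)" using 4 H_def by (simp add: split_exp_rec)
    have M: "M = 2 * H + M mod 2" "M mod 2 \<le> 1" using H_def by auto
    define X where "X = (2::nat) ^ split_exp H"
    have pow: "2 ^ split_exp M = 2 * X" "2 ^ floor_log M = 4 * W"
      using log exp W X_def by simp_all
    have "X \<le> H" "2 * W \<le> 2 * (H - X) + 1" "2 * (H - X) + 1 \<le> 4 * W"
      using IH(3-5) W X_def by simp_all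
    moreover have "W \<le> H - X" "H - X < 2 * W" using \<open>2 * W \<le> _\<close> \<open>_ \<le> 4 * W\<close> by presburger+
    ultimately have "2 * X \<le> M \<and> 4 * W \<le> 2 * (M - 2 * X) + 1 \<and> 2 * (M - 2 * X) + 1 \<le> 2 * (4 * W)"
      using M by linarith
    then show ?thesis using IH(1,2) pow unfolding log exp by simp
  qed (simp_all add: split_exp_small log_small)
qed

lemma split_exp_less: "2 \<le> M \<Longrightarrow> 2 ^ split_exp M < M"
proof -
  assume "2 \<le> M"
  then have "2 \<le> (2::nat) ^ floor_log M" using floor_log_pos[of M] by (simp add: self_le_power)
  moreover have "2 ^ floor_log M \<le> 2 * (M - 2 ^ split_exp M) + 1" "2 ^ split_exp M \<le> M"
    using split_exp_bounds[of M] \<open>2 \<le> M\<close> by simp_all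
  ultimately show ?thesis by linarith
qed

lemma split_exp_balanced:
  assumes "1 \<le> M"
  shows "balanced_part (2 * M + 1) (2 * 2 ^ split_exp M)"
    and "balanced_part (2 * M + 1) (2 * (M - 2 ^ split_exp M) + 1)"
proof -
  note bounds = split_exp_bounds[OF assms]
  have log: "floor_log (2 * M + 1) = Suc (floor_log M)"
    using floor_log_rec[of "2 * M + 1"] assms by (simp del: floor_log_half)
  have "(2::nat) ^ floor_log M \<le> 2 ^ Suc (split_exp M)" "(2::nat) ^ split_exp M \<le> 2 ^ floor_log M"
    using bounds by (simp_all only: power_increasing_iff)
  then show "balanced_part (2 * M + 1) (2 * 2 ^ split_exp M)"
    and "balanced_part (2 * M + 1) (2 * (M - 2 ^ split_exp M) + 1)"
    using bounds log by (simp_all add: balanced_part_def)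
qed

lemma gfb_merge_split_complete:
  assumes "2 \<le> M" "2 ^ i < leaves R" "leaves R < 2 ^ Suc i"
  shows "iso_tree (gfb_merge (replicate (M - 1) (complete_tree i) @ [R]))
    (Node (gfb_merge (replicate (M - 2 ^ split_exp M - 1) (complete_tree i) @ [R])) (complete_tree (i + split_exp M)))"
  using assms
proof (induction M arbitrary: i R rule: less_induct)
  case (less M)
  consider "M = 2" | "M = 3" | "4 \<le> M" using less.prems by linarith
  then show ?case
  proof cases
    case 1
    then show ?thesis by (simp add: split_exp_small)
  next
    case 2
    then show ?thesis using gfb_merge_step[of 3 i R] less.prems by (simp add: split_exp_small)
  next
    case 3
    define H where "H = M div 2"
    define A where "A = (if even M then Node (complete_tree i) R else Node R (complete_tree (Suc i)))"
    have A: "2 ^ Suc i < leaves A" "leaves A < 2 ^ Suc (Suc i)" using less.prems A_def by auto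
    have "2 \<le> H" "H < M" using 3 H_def by auto
    have exp: "split_exp M = Suc (split_exp H)" using 3 H_def by (simp add: split_exp_rec)
    have "2 ^ split_exp H < H" using \<open>2 \<le> H\<close> by (rule split_exp_less)
    define D where "D = M - 2 ^ split_exp M"
    have "M = 2 * H + M mod 2" using H_def by simp
    then have "D = 2 * (H - 2 ^ split_exp H) + M mod 2"
      using \<open>2 ^ split_exp H < H\<close> exp D_def by simp
    then have "2 \<le> D" "even D = even M" "D div 2 = H - 2 ^ split_exp H"
      using \<open>2 ^ split_exp H < H\<close> by presburger+
    have "gfb_merge (replicate (D - 1) (complete_tree i) @ [R]) =
        gfb_merge (replicate (H - 2 ^ split_exp H - 1) (complete_tree (Suc i)) @ [A])"
      using gfb_merge_step[OF \<open>2 \<le> D\<close> less.prems(2,3)] \<open>even D = even M\<close> \<open>D div 2 = _\<close> A_def by simp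
    moreover have "gfb_merge (replicate (M - 1) (complete_tree i) @ [R]) =
        gfb_merge (replicate (H - 1) (complete_tree (Suc i)) @ [A])"
      using gfb_merge_step[OF less.prems] H_def A_def by simp
    ultimately show ?thesis using less.IH[OF \<open>H < M\<close> \<open>2 \<le> H\<close> A] exp D_def by simp
  qed
qed

lemma balanced_part_mult_pow2:
  "0 < n \<Longrightarrow> balanced_part (2 ^ t * n) (2 ^ t * a) \<longleftrightarrow> balanced_part n a"
  by (simp add: balanced_part_def floor_log_mult_pow2 power_add mult.left_commute)

lemma gfb_odd_multiple_split:
  assumes "1 \<le> M"
  shows "iso_tree (gfb (2 ^ t * (2 * M + 1)))
    (Node (gfb (2 ^ t * (2 * (M - 2 ^ split_exp M) + 1))) (complete_tree (Suc t + split_exp M)))"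
proof -
  define D where "D = M - 2 ^ split_exp M"
  define R0 where "R0 = Node (complete_tree t) (complete_tree (Suc t))"
  have gfb_merge_odd: "gfb (2 ^ t * (2 * p + 1)) = gfb_merge (replicate (p - 1) (complete_tree (Suc t)) @ [R0])"
    if "1 \<le> p" for p
    using gfb_merge_replicate_pow2[of t "2 * p + 1" 0] gfb_merge_replicate_odd[OF that, of t]
    unfolding gfb_def R0_def by simp
  show ?thesis
  proof (cases "M = 1")
    case True
    then show ?thesis using gfb_merge_odd[of 1] gfb_pow2[of t] by (simp add: R0_def split_exp_small)
  next
    case False
    then have "2 \<le> M" using assms by simp
    then have "1 \<le> D" using split_exp_less D_def by fastforce
    then show ?thesis
      using gfb_merge_split_complete[OF \<open>2 \<le> M\<close>, of "Suc t" R0] gfb_merge_odd[OF assms]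
        gfb_merge_odd[OF \<open>1 \<le> D\<close>] D_def R0_def by simp
  qed
qed

lemma gfb_root_split:
  assumes "1 \<le> n" "\<nexists>k. n = 2 ^ k"
  obtains e where "iso_tree (gfb n) (Node (gfb (n - 2 ^ e)) (complete_tree e))" "2 ^ e < n"
    and "balanced_part n (2 ^ e)" "balanced_part n (n - 2 ^ e)"
proof -
  define t where "t = multiplicity 2 n"
  obtain Q where n: "n = 2 ^ t * Q" "odd Q" using multiplicity_decompose'[of n 2] assms(1) t_def by auto
  then obtain M where Q: "Q = 2 * M + 1" by (auto elim: oddE)
  have "1 \<le> M" using assms(2) n Q by (cases M) auto
  define e where "e = Suc t + split_exp M"
  define D where "D = M - 2 ^ split_exp M"
  have pow: "(2::nat) ^ e = 2 ^ t * (2 * 2 ^ split_exp M)" by (simp add: e_def power_add)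
  have "2 ^ split_exp M \<le> M" using split_exp_bounds[OF \<open>1 \<le> M\<close>] by simp
  then have rest: "n - 2 ^ e = 2 ^ t * (2 * D + 1)"
    using n Q pow D_def by (simp add: algebra_simps diff_mult_distrib2)
  have "iso_tree (gfb n) (Node (gfb (n - 2 ^ e)) (complete_tree e))"
    using gfb_odd_multiple_split[OF \<open>1 \<le> M\<close>, of t] n Q rest D_def e_def by simp
  moreover have "2 ^ e < n"
  proof -
    have "2 * 2 ^ split_exp M < 2 * M + 1" using \<open>2 ^ split_exp M \<le> M\<close> by simp
    then show ?thesis unfolding pow n(1) Q by (intro mult_strict_left_mono) simp_all
  qed
  moreover have "balanced_part n (2 ^ e)" "balanced_part n (n - 2 ^ e)"
  proof -
    have "balanced_part (2 * M + 1) (2 * 2 ^ split_exp M)" "balanced_part (2 * M + 1) (2 * D + 1)"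
      using split_exp_balanced[OF \<open>1 \<le> M\<close>] D_def by simp_all
    then have "balanced_part (2 ^ t * (2 * M + 1)) (2 ^ t * (2 * 2 ^ split_exp M))"
        "balanced_part (2 ^ t * (2 * M + 1)) (2 ^ t * (2 * D + 1))"
      using balanced_part_mult_pow2[of "2 * M + 1"] by (simp_all only: zero_less_Suc add_Suc_right add_0_right)
    then show "balanced_part n (2 ^ e)" "balanced_part n (n - 2 ^ e)"
      by (simp_all only: rest) (simp_all only: pow n(1) Q)
  qed
  ultimately show ?thesis using that by blast
qed

section \<open>Symmetry vertices of Colless-minimal trees\<close>

lemma balanced_part_exponent: "balanced_part n (2 ^ i) \<Longrightarrow> i = floor_log n \<or> Suc i = floor_log n"
  unfolding balanced_part_def
  by (metis exponent_eq_if_pow2_between le_SucE power_Suc power_increasing_iff one_less_numeral_iff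
      semiring_norm(76) le_antisym)

lemma balanced_pow2_part_unique:
  assumes "a + b = n" "balanced_part n a" "balanced_part n b" "a = 2 ^ i"
    and "balanced_part n (2 ^ e)" "balanced_part n (n - 2 ^ e)" "2 ^ e < n"
  shows "a = 2 ^ e \<and> b = n - 2 ^ e \<or> a = n - 2 ^ e \<and> b = 2 ^ e"
proof -
  define K where "K = floor_log n"
  have "2 \<le> n" using assms(1) balanced_part_pos[OF assms(2)] balanced_part_pos[OF assms(3)] by linarith
  define P :: nat where "P = 2 ^ (K - 1)"
  have P: "2 ^ K = 2 * P"
    using floor_log_pos[OF \<open>2 \<le> n\<close>] unfolding K_def[symmetric] by (cases K) (simp_all add: P_def)
  have pow2_cases: "2 ^ j = P \<or> 2 ^ j = 2 * P" if "balanced_part n (2 ^ j)" for j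
    using balanced_part_exponent[OF that] P unfolding K_def[symmetric] by auto
  have "a = P \<or> a = 2 * P" "2 ^ e = P \<or> 2 ^ e = 2 * P"
    using pow2_cases[of i] pow2_cases[of e] assms(2,4,5) by auto
  moreover have "P \<le> b" "b \<le> 2 * P" "P \<le> n - 2 ^ e" "n - 2 ^ e \<le> 2 * P"
    using assms(3,6) P unfolding balanced_part_def K_def[symmetric] by simp_all
  ultimately show ?thesis using assms(1,7) by arith
qed

lemma iso_gfb_Node_if_pow2_part:
  assumes "balanced_part (leaves a + leaves b) (leaves a)" "balanced_part (leaves a + leaves b) (leaves b)"
    and "leaves a \<noteq> leaves b" "(\<exists>i. leaves a = 2 ^ i) \<or> (\<exists>i. leaves b = 2 ^ i)"
    and "iso_tree a (gfb (leaves a))" "iso_tree b (gfb (leaves b))"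
  shows "iso_tree (Node a b) (gfb (leaves a + leaves b))"
proof -
  define n where "n = leaves a + leaves b"
  have "\<nexists>k. n = 2 ^ k"
  proof
    assume "\<exists>k. n = 2 ^ k"
    then have "2 ^ floor_log (leaves a + leaves b) = leaves a + leaves b" using n_def by auto
    then show False using assms(1-3) unfolding balanced_part_def by linarith
  qed
  moreover have "1 \<le> n" using n_def leaves_ge_1[of a] by simp
  ultimately obtain e where e: "iso_tree (gfb n) (Node (gfb (n - 2 ^ e)) (complete_tree e))" "2 ^ e < n"
    "balanced_part n (2 ^ e)" "balanced_part n (n - 2 ^ e)"
    using gfb_root_split by blast
  have bal: "balanced_part n (leaves a)" "balanced_part n (leaves b)" using assms(1,2) n_def by simp_all
  from assms(4) have "leaves a = 2 ^ e \<and> leaves b = n - 2 ^ e \<or> leaves a = n - 2 ^ e \<and> leaves b = 2 ^ e"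
  proof
    assume "\<exists>i. leaves a = 2 ^ i"
    then show ?thesis using balanced_pow2_part_unique[OF n_def[symmetric] bal _ e(3,4,2)] by blast
  next
    assume "\<exists>i. leaves b = 2 ^ i"
    moreover have "leaves b + leaves a = n" using n_def by simp
    ultimately show ?thesis using balanced_pow2_part_unique[OF _ bal(2,1) _ e(3,4,2)] by blast
  qed
  then have "iso_tree (Node a b) (Node (gfb (n - 2 ^ e)) (complete_tree e))"
    using assms(5,6) gfb_pow2[of e] by auto
  from iso_tree_trans[OF this iso_tree_sym[OF e(1)]] show ?thesis unfolding n_def .
qed

lemma sym_vertices_le_if_colless_minimal:
  "colless T = min_colless_rec (leaves T) \<Longrightarrow>
    int (sym_vertices T) \<le> int (leaves T) - 1 - bit_span (leaves T)"
proof (induction T)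
  case (Node a b)
  note minimal = colless_minimal_Node[OF Node.prems]
  have IH: "int (sym_vertices a) \<le> int (leaves a) - 1 - bit_span (leaves a)"
      "int (sym_vertices b) \<le> int (leaves b) - 1 - bit_span (leaves b)"
    using Node.IH minimal by auto
  show ?case
  proof (cases "leaves a = leaves b")
    case True
    have "bit_span (leaves a + leaves b) = bit_span (leaves a)" "0 \<le> bit_span (leaves a)"
      using True bit_span_double[of "leaves a"] bit_span_nonneg[of "leaves a"] leaves_ge_1[of a]
      by (simp_all add: mult_2)
    then show ?thesis using IH True by simp
  next
    case False
    then have "\<not> iso_tree a b" using iso_tree_leaves by blast
    moreover have "bit_span (leaves a + leaves b) \<le> bit_span (leaves a) + bit_span (leaves b) + 1"
      using bit_span_add(1) tight_split_balanced[OF minimal(3) leaves_ge_1 leaves_ge_1] False by blast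
    ultimately show ?thesis using IH by simp
  qed
qed (use bit_span_pow2[of 0] in simp)

lemma iso_gfb_if_sym_vertices_eq:
  "colless T = min_colless_rec (leaves T) \<Longrightarrow>
    int (sym_vertices T) = int (leaves T) - 1 - bit_span (leaves T) \<Longrightarrow> iso_tree T (gfb (leaves T))"
proof (induction T)
  case Leaf
  then show ?case using gfb_pow2[of 0] by simp
next
  case (Node a b)
  note minimal = colless_minimal_Node[OF Node.prems(1)]
  have bound: "int (sym_vertices a) \<le> int (leaves a) - 1 - bit_span (leaves a)"
      "int (sym_vertices b) \<le> int (leaves b) - 1 - bit_span (leaves b)"
    using sym_vertices_le_if_colless_minimal minimal by auto
  show ?case
  proof (cases "leaves a = leaves b")
    case True
    have "bit_span (leaves a + leaves b) = bit_span (leaves a)" "0 \<le> bit_span (leaves a)"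
      using True bit_span_double[of "leaves a"] bit_span_nonneg[of "leaves a"] leaves_ge_1[of a]
      by (simp_all add: mult_2)
    then have "bit_span (leaves a) = 0" "iso_tree a (gfb (leaves a))" "iso_tree b (gfb (leaves b))"
      using Node bound minimal True by (auto split: if_splits)
    define k where "k = floor_log (leaves a)"
    have "leaves a = 2 ^ k"
      unfolding k_def using leaves_ge_1[of a] \<open>bit_span (leaves a) = 0\<close> by (intro pow2_if_bit_span_eq_0) auto
    then have "gfb (leaves a) = complete_tree k" "gfb (leaves a + leaves b) = complete_tree (Suc k)"
      using True gfb_pow2[of k] gfb_pow2[of "Suc k"] by (simp_all add: mult_2)
    then show ?thesis using \<open>iso_tree a (gfb (leaves a))\<close> \<open>iso_tree b (gfb (leaves b))\<close> True by simp
  next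
    case False
    then have "\<not> iso_tree a b" using iso_tree_leaves by blast
    have bal: "balanced_part (leaves a + leaves b) (leaves a)" "balanced_part (leaves a + leaves b) (leaves b)"
      using tight_split_balanced[OF minimal(3) leaves_ge_1 leaves_ge_1] by auto
    then have "bit_span (leaves a + leaves b) = bit_span (leaves a) + bit_span (leaves b) + 1"
        "iso_tree a (gfb (leaves a))" "iso_tree b (gfb (leaves b))"
      using bit_span_add(1)[OF bal False] Node bound minimal \<open>\<not> iso_tree a b\<close> by auto
    then show ?thesis
      using iso_gfb_Node_if_pow2_part[OF bal False] bit_span_add(2)[OF bal False] by simp
  qed
qed

lemma sym_vertices_gfb: "1 \<le> n \<Longrightarrow> int (sym_vertices (gfb n)) = int n - 1 - bit_span n"
proof (induction n rule: less_induct)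
  case (less n)
  show ?case
  proof (cases "\<exists>k. n = 2 ^ k")
    case True
    then obtain k where n: "n = 2 ^ k" by blast
    have "(1::nat) \<le> 2 ^ k" by simp
    then show ?thesis by (simp add: n gfb_pow2 sym_vertices_complete_tree of_nat_diff)
  next
    case False
    then obtain e where e: "iso_tree (gfb n) (Node (gfb (n - 2 ^ e)) (complete_tree e))" "2 ^ e < n"
      "balanced_part n (2 ^ e)" "balanced_part n (n - 2 ^ e)"
      using gfb_root_split less.prems by blast
    define q where "q = n - 2 ^ e"
    have split: "iso_tree (gfb n) (Node (gfb q) (complete_tree e))" "balanced_part (q + 2 ^ e) q"
        "balanced_part (q + 2 ^ e) (2 ^ e)"
      using e unfolding q_def by simp_all
    have n: "n = q + 2 ^ e" using q_def e(2) by simp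
    have "1 \<le> q" using balanced_part_pos[OF split(2)] by simp
    have "q \<noteq> 2 ^ e" using False n by (metis mult_2 power_Suc)
    then have "\<not> iso_tree (gfb q) (complete_tree e)"
      using iso_tree_leaves[of "gfb q" "complete_tree e"] leaves_gfb[OF \<open>1 \<le> q\<close>] by auto
    then have "sym_vertices (gfb n) + 1 = sym_vertices (gfb q) + 2 ^ e"
      using iso_tree_sym_vertices[OF split(1)] sym_vertices_complete_tree[of e] one_le_power[of 2 e] by simp
    then have "int (sym_vertices (gfb n)) + 1 = int (sym_vertices (gfb q)) + 2 ^ e"
      by (metis of_nat_1 of_nat_add of_nat_numeral of_nat_power)
    moreover have "bit_span n = bit_span q + 1"
      using bit_span_add(2)[OF split(2,3) \<open>q \<noteq> 2 ^ e\<close>] n by auto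
    moreover have "int (sym_vertices (gfb q)) = int q - 1 - bit_span q"
      using less.IH \<open>1 \<le> q\<close> n by simp
    ultimately show ?thesis using n by simp
  qed
qed

lemma sum_pow2_less:
  "sorted_wrt (>) ms \<Longrightarrow> \<forall>m\<in>set ms. m < k \<Longrightarrow> (\<Sum>m\<leftarrow>ms. 2 ^ m) < (2::nat) ^ k"
proof (induction ms arbitrary: k)
  case (Cons m ms)
  have "(\<Sum>m\<leftarrow>ms. 2 ^ m) < (2::nat) ^ m" using Cons by auto
  moreover have "(2::nat) ^ Suc m \<le> 2 ^ k" using Cons.prems(2) by (intro power_increasing) auto
  ultimately show ?case by simp
qed simp

lemma pow2_dvd_sum_pow2: "\<forall>m\<in>set ms. k \<le> m \<Longrightarrow> (2::nat) ^ k dvd (\<Sum>m\<leftarrow>ms. 2 ^ m)"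
  by (induction ms) (auto intro!: dvd_add le_imp_power_dvd)

lemma floor_log_sum_pow2:
  assumes "ms \<noteq> []" "sorted_wrt (>) ms"
  shows "floor_log (\<Sum>m\<leftarrow>ms. 2 ^ m) = hd ms"
proof -
  obtain m rest where ms: "ms = m # rest" using assms(1) by (cases ms) auto
  have "(\<Sum>m\<leftarrow>rest. (2::nat) ^ m) < 2 ^ m" using assms(2) ms by (intro sum_pow2_less) auto
  then show ?thesis using ms by (intro floor_log_eqI) auto
qed

lemma multiplicity_2_sum_pow2:
  assumes "ms \<noteq> []" "sorted_wrt (>) ms"
  shows "multiplicity (2::nat) (\<Sum>m\<leftarrow>ms. 2 ^ m) = last ms"
proof -
  obtain rest l where ms: "ms = rest @ [l]" using assms(1) by (metis append_butlast_last_id)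
  have "(2::nat) ^ Suc l dvd (\<Sum>m\<leftarrow>rest. 2 ^ m)"
    using assms(2) ms by (intro pow2_dvd_sum_pow2) (auto simp: sorted_wrt_append)
  moreover have "\<not> (2::nat) ^ Suc l dvd 2 ^ l" by (simp add: power_Suc)
  ultimately have "\<not> (2::nat) ^ Suc l dvd (\<Sum>m\<leftarrow>rest. 2 ^ m) + 2 ^ l"
    by (simp add: dvd_add_right_iff)
  moreover have "(2::nat) ^ l dvd (\<Sum>m\<leftarrow>rest. 2 ^ m) + 2 ^ l"
    using \<open>2 ^ Suc l dvd _\<close> by (metis dvd_add dvd_mult_left dvd_refl power_Suc2)
  ultimately show ?thesis using ms by (simp add: multiplicity_eqI del: power_Suc)
qed

theorem proposition8:
  fixes n :: nat and ms :: "nat list"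
  assumes "n \<ge> 1"
    and "ms \<noteq> []"
    and "sorted_wrt (>) ms"
    and "n = (\<Sum>m\<leftarrow>ms. 2 ^ m)"
  shows "int (sym_vertices (gfb n)) = int n - 1 - (int (hd ms) - int (last ms)) \<and>
         (\<forall>T. leaves T = n \<longrightarrow> colless T = min_colless n \<longrightarrow> \<not> iso_tree T (gfb n)
           \<longrightarrow> sym_vertices T < sym_vertices (gfb n))"
proof -
  have span: "bit_span n = int (hd ms) - int (last ms)"
    using floor_log_sum_pow2 multiplicity_2_sum_pow2 assms(2-4) by (simp add: bit_span_def)
  have gfb: "int (sym_vertices (gfb n)) = int n - 1 - bit_span n"
    using sym_vertices_gfb assms(1) .
  have "sym_vertices T < sym_vertices (gfb n)"
    if "leaves T = n" "colless T = min_colless n" "\<not> iso_tree T (gfb n)" for T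
  proof -
    have minimal: "colless T = min_colless_rec (leaves T)"
      using that(1,2) min_colless_eq_rec assms(1) by simp
    have "int (sym_vertices T) < int n - 1 - bit_span n"
      using sym_vertices_le_if_colless_minimal[OF minimal] iso_gfb_if_sym_vertices_eq[OF minimal] that(1,3)
      by fastforce
    then show ?thesis using gfb by linarith
  qed
  then show ?thesis using gfb span by auto
qed

end
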